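(* In the odd setting below, for all $i,j\in\{1,\dots,n\}$ and $\ell\in\{0,\dots,s-1\}$, the determinant $D^j_{2\ell,i}$ is homogeneous of degree $\ell/s$.
   Context: Odd setting: integers $n\ge1$, $s\ge1$, $m=2s+1$; $a_k^0,\dots,a_k^{2s}$ are $n\times n$ matrices with indeterminate entries, $N$-periodic in $k$. $Q_k$ is the $mn\times mn$ block matrix with $I_n$ in blocks $(i+1,i)$, last block column $(a_k^0;\dots;a_k^{2s})$, $O_n$ elsewhere. $r_k=(a_k^0;O_n;a_k^2;O_n;\dots;O_n;a_k^{2s})$. $F^{(k)}_0=r_k$, $F^{(k)}_\ell=Q_k\cdots Q_{k+\ell-1}r_{k+\ell}$ ($mn\times n$), $N_k=(F^{(k)}_0,\dots,F^{(k)}_{2s})$. For $0\le \rho\le 2s$, $D^j_{\rho,i}$ (for a fixed $k$) is the determinant of the matrix obtained from $N_k$ by replacing the $i$-th column of the block column $F^{(k)}_\rho$ by the $j$-th column of $F^{(k)}_{2s+1}$. The scaling, for $\mu>0$: $a^{2r+1}\mapsto\mu^{-1+r/s}a^{2r+1}$ ($r=0,\dots,s-1$), $a^{2r}\mapsto\mu^{r/s}a^{2r}$ ($r=0,\dots,s$); homogeneous of degree $d$ means multiplied by $\mu^d$. *)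

theory Defs
  imports "Jordan_Normal_Form.Determinant"
begin

text \<open>Coefficient data: a k r p q is the (p,q) entry (0-indexed, p,q < n)
  of the n x n matrix a_k^r (r = 0..2s).  Blocks are indexed from 0.\<close>

definition Qmat :: "(nat \<Rightarrow> nat \<Rightarrow> nat \<Rightarrow> nat \<Rightarrow> real) \<Rightarrow> nat \<Rightarrow> nat \<Rightarrow> nat \<Rightarrow> real mat" where
  "Qmat a n s k = mat ((2*s+1)*n) ((2*s+1)*n)
     (\<lambda>(p,q). if q div n = 2*s then a k (p div n) (p mod n) (q mod n)
              else if p div n = q div n + 1 \<and> p mod n = q mod n then 1 else 0)"

definition rmat :: "(nat \<Rightarrow> nat \<Rightarrow> nat \<Rightarrow> nat \<Rightarrow> real) \<Rightarrow> nat \<Rightarrow> nat \<Rightarrow> nat \<Rightarrow> real mat" where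
  "rmat a n s k = mat ((2*s+1)*n) n
     (\<lambda>(p,q). if even (p div n) then a k (p div n) (p mod n) q else 0)"

fun prodQ :: "(nat \<Rightarrow> nat \<Rightarrow> nat \<Rightarrow> nat \<Rightarrow> real) \<Rightarrow> nat \<Rightarrow> nat \<Rightarrow> nat \<Rightarrow> nat \<Rightarrow> real mat" where
  "prodQ a n s k 0 = 1\<^sub>m ((2*s+1)*n)"
| "prodQ a n s k (Suc l) = prodQ a n s k l * Qmat a n s (k + l)"

definition Fmat :: "(nat \<Rightarrow> nat \<Rightarrow> nat \<Rightarrow> nat \<Rightarrow> real) \<Rightarrow> nat \<Rightarrow> nat \<Rightarrow> nat \<Rightarrow> nat \<Rightarrow> real mat" where
  "Fmat a n s k l = prodQ a n s k l * rmat a n s (k + l)"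

text \<open>N_k = (F_0, ..., F_{2s}); column c lies in block c div n, at column c mod n.\<close>
definition Nmat :: "(nat \<Rightarrow> nat \<Rightarrow> nat \<Rightarrow> nat \<Rightarrow> real) \<Rightarrow> nat \<Rightarrow> nat \<Rightarrow> nat \<Rightarrow> real mat" where
  "Nmat a n s k = mat ((2*s+1)*n) ((2*s+1)*n)
     (\<lambda>(p,c). Fmat a n s k (c div n) $$ (p, c mod n))"

text \<open>D^j_{rho,i} with i, j in {1..n} (1-indexed as in the paper).\<close>
definition Ddet :: "(nat \<Rightarrow> nat \<Rightarrow> nat \<Rightarrow> nat \<Rightarrow> real) \<Rightarrow> nat \<Rightarrow> nat \<Rightarrow> nat \<Rightarrow> nat \<Rightarrow> nat \<Rightarrow> nat \<Rightarrow> real" where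
  "Ddet a n s k \<rho> i j = det (mat ((2*s+1)*n) ((2*s+1)*n)
     (\<lambda>(p,c). if c = \<rho>*n + (i - 1) then Fmat a n s k (2*s+1) $$ (p, j - 1)
              else Nmat a n s k $$ (p, c)))"

definition scale :: "real \<Rightarrow> nat \<Rightarrow> (nat \<Rightarrow> nat \<Rightarrow> nat \<Rightarrow> nat \<Rightarrow> real) \<Rightarrow> (nat \<Rightarrow> nat \<Rightarrow> nat \<Rightarrow> nat \<Rightarrow> real)" where
  "scale \<mu> s a = (\<lambda>k r p q.
     (if even r then \<mu> powr (real (r div 2) / real s)
      else \<mu> powr (-1 + real (r div 2) / real s)) * a k r p q)"

end

theory Submission
  imports Defs
begin

text \<open>The scaling is a conjugation. Let \<Lambda> be block diagonal with the scale factor of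
  a^r on block r, and D diagonal with \<mu> on even and \<nu> = \<mu>^(-1-1/s) on odd blocks. Then
  the scaled Q_k is \<Lambda> Q_k D \<Lambda>^-1 and the scaled r_k is \<Lambda> r_k, so the scaled F_l is
  \<Lambda> H_l with H_l = Q_k D Q_(k+1) D ... Q_(k+l-1) D r_(k+l). Since D Q D equals \<mu>\<nu> Q up
  to a term through r, H_l is a scalar multiple of F_l plus a combination of columns of
  the odd-index F_t, t < l. Replacing a column of the even block F_(2l) leaves all odd
  blocks intact, so these corrections are column operations; the determinant only picks
  up the diagonal factors, which cancel column by column except at the replaced column,
  where they contribute \<mu>^(l/s).\<close>

lemma sum_lessThan_mult_blocks:
  fixes f :: "nat \<Rightarrow> 'a::comm_monoid_add"
  shows "(\<Sum>x<m*n. f x) = (\<Sum>t<m. \<Sum>q<n. f (t*n+q))"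
proof -
  have shift: "(\<Sum>x\<in>{c..<c+n}. f x) = (\<Sum>q<n. f (c+q))" for c
    using sum.shift_bounds_nat_ivl[of f 0 c n] by (simp add: atLeast0LessThan add.commute)
  have "(\<Sum>x<m*n. f x) = (\<Sum>t<m. \<Sum>x\<in>{t*n..<t*n+n}. f x)"
    by (rule sum.nat_group[symmetric])
  then show ?thesis by (simp only: shift)
qed

lemma sum_swap_nested:
  fixes f :: "'a \<Rightarrow> 'b \<Rightarrow> 'c \<Rightarrow> 'd \<Rightarrow> 'e::comm_monoid_add"
  shows "(\<Sum>x\<in>A. \<Sum>y\<in>B. \<Sum>t\<in>T. \<Sum>q\<in>R. f x y t q) = (\<Sum>t\<in>T. \<Sum>q\<in>R. \<Sum>x\<in>A. \<Sum>y\<in>B. f x y t q)"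
proof -
  have "(\<Sum>x\<in>A. \<Sum>y\<in>B. \<Sum>t\<in>T. \<Sum>q\<in>R. f x y t q) = (\<Sum>x\<in>A. \<Sum>t\<in>T. \<Sum>q\<in>R. \<Sum>y\<in>B. f x y t q)"
    by (intro sum.cong refl) (simp only: sum.swap[of _ B T] sum.swap[of _ B R])
  also have "\<dots> = (\<Sum>t\<in>T. \<Sum>q\<in>R. \<Sum>x\<in>A. \<Sum>y\<in>B. f x y t q)"
    by (simp only: sum.swap[of _ A T] sum.swap[of _ A R])
  finally show ?thesis .
qed

lemma sum_lessThan_odd_below:
  fixes g :: "nat \<Rightarrow> 'a::comm_monoid_add"
  assumes "B \<le> M" and "\<And>t. even t \<Longrightarrow> g t = 0"
  shows "(\<Sum>t<M. if odd t \<and> t < B then g t else 0) = (\<Sum>t<B. g t)"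
proof -
  have "(\<Sum>t<B. g t) = (\<Sum>t<M. if t < B then g t else 0)"
    by (rule sum.mono_neutral_cong_left) (use assms(1) in \<open>auto simp: less_le_trans\<close>)
  also have "\<dots> = (\<Sum>t<M. if odd t \<and> t < B then g t else 0)"
    by (rule sum.cong[OF refl]) (use assms(2) in auto)
  finally show ?thesis by simp
qed

text \<open>A permutation other than the identity would strictly increase the total weight,
  so its product meets a zero entry.\<close>
lemma det_eq_prod_diag_if_weight_increasing:
  fixes A :: "'a::comm_ring_1 mat" and w :: "nat \<Rightarrow> nat"
  assumes A: "A \<in> carrier_mat N N"
    and W: "\<And>i j. i < N \<Longrightarrow> j < N \<Longrightarrow> i \<noteq> j \<Longrightarrow> A $$ (i,j) \<noteq> 0 \<Longrightarrow> w i < w j"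
  shows "det A = (\<Prod>i=0..<N. A $$ (i,i))"
proof -
  let ?U = "{0..<N}"
  let ?PU = "{p. p permutes ?U}"
  let ?pp = "\<lambda>p. signof p * (\<Prod> i = 0 ..< N. A $$ (i, p i))"
  have zero: "?pp p = 0" if p: "p permutes ?U" and ne: "p \<noteq> id" for p
  proof (rule ccontr)
    assume "?pp p \<noteq> 0"
    then have nz: "\<And>i. i < N \<Longrightarrow> A $$ (i, p i) \<noteq> 0"
      using prod_zero[of "{0..<N}" "\<lambda>i. A $$ (i, p i)"] by force
    have pi: "\<And>i. i < N \<Longrightarrow> p i < N" using p permutes_in_image by fastforce
    have le: "\<And>i. i \<in> ?U \<Longrightarrow> w i \<le> w (p i)"
      using W nz pi by (metis atLeastLessThan_iff less_imp_le order_refl)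
    obtain i where i: "p i \<noteq> i" using ne by (metis eq_id_iff)
    then have iU: "i \<in> ?U" using p by (meson permutes_not_in)
    have lt: "w i < w (p i)" using W nz pi iU i by auto
    have "sum w ?U < sum (w \<circ> p) ?U"
      by (rule sum_strict_mono_ex1) (use le lt iU in auto)
    moreover have "sum w ?U = sum (w \<circ> p) ?U" by (rule sum.permute[OF p])
    ultimately show False by simp
  qed
  have "det A = sum ?pp ?PU" by (rule det_def'[OF A])
  also have "\<dots> = ?pp id + sum ?pp (?PU - {id})"
    by (rule sum.remove) (auto simp: permutes_id finite_permutations)
  also have "sum ?pp (?PU - {id}) = 0" by (rule sum.neutral) (use zero in auto)
  finally show ?thesis by simp
qed

lemma index_mult_mat_sum:
  assumes "A \<in> carrier_mat m r" "B \<in> carrier_mat r m'" "p < m" "c < m'"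
  shows "(A * B) $$ (p,c) = (\<Sum>y<r. A $$ (p,y) * B $$ (y,c))"
  using assms by (simp add: scalar_prod_def lessThan_atLeast0)

lemma Qmat_carrier [simp]: "Qmat a n s k \<in> carrier_mat ((2*s+1)*n) ((2*s+1)*n)"
  by (simp add: Qmat_def)

lemma rmat_carrier [simp]: "rmat a n s k \<in> carrier_mat ((2*s+1)*n) n"
  by (simp add: rmat_def)

lemma prodQ_carrier [simp]: "prodQ a n s k l \<in> carrier_mat ((2*s+1)*n) ((2*s+1)*n)"
proof (induction l)
  case (Suc l)
  show ?case using mult_carrier_mat[OF Suc Qmat_carrier] by (simp only: prodQ.simps)
qed (simp only: prodQ.simps one_carrier_mat)

lemma prodQ_Suc_left: "prodQ a n s k (Suc l) = Qmat a n s k * prodQ a n s (Suc k) l"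
proof (induction l arbitrary: k)
  case 0
  show ?case using left_mult_one_mat[OF Qmat_carrier] right_mult_one_mat[OF Qmat_carrier] by simp
next
  case (Suc l)
  have "prodQ a n s k (Suc (Suc l)) = (Qmat a n s k * prodQ a n s (Suc k) l) * Qmat a n s (Suc k + l)"
    using Suc by simp
  also have "\<dots> = Qmat a n s k * (prodQ a n s (Suc k) l * Qmat a n s (Suc k + l))"
    by (rule assoc_mult_mat[OF Qmat_carrier prodQ_carrier Qmat_carrier])
  finally show ?case by simp
qed

lemma Fmat_Suc: "Fmat a n s k (Suc l) = Qmat a n s k * Fmat a n s (Suc k) l"
proof -
  have "Fmat a n s k (Suc l) = Qmat a n s k * prodQ a n s (Suc k) l * rmat a n s (Suc k + l)"
    unfolding Fmat_def prodQ_Suc_left by simp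
  also have "\<dots> = Qmat a n s k * (prodQ a n s (Suc k) l * rmat a n s (Suc k + l))"
    by (rule assoc_mult_mat[OF Qmat_carrier prodQ_carrier rmat_carrier])
  finally show ?thesis unfolding Fmat_def .
qed

lemma Fmat_carrier [simp]: "Fmat a n s k l \<in> carrier_mat ((2*s+1)*n) n"
  unfolding Fmat_def by (rule mult_carrier_mat[OF prodQ_carrier rmat_carrier])

locale block_indexing =
  fixes n s :: nat
  assumes n_pos: "1 \<le> n"
begin

abbreviation mn :: nat where "mn \<equiv> (2*s+1)*n"

definition Qent :: "(nat \<Rightarrow> nat \<Rightarrow> nat \<Rightarrow> nat \<Rightarrow> real) \<Rightarrow> nat \<Rightarrow> nat \<Rightarrow> nat \<Rightarrow> real" where
  "Qent b k p q = (if q div n = 2*s then b k (p div n) (p mod n) (q mod n)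
     else if p div n = q div n + 1 \<and> p mod n = q mod n then 1 else 0)"

definition rent :: "(nat \<Rightarrow> nat \<Rightarrow> nat \<Rightarrow> nat \<Rightarrow> real) \<Rightarrow> nat \<Rightarrow> nat \<Rightarrow> nat \<Rightarrow> real" where
  "rent b k p q = (if even (p div n) then b k (p div n) (p mod n) q else 0)"

fun Fent :: "(nat \<Rightarrow> nat \<Rightarrow> nat \<Rightarrow> nat \<Rightarrow> real) \<Rightarrow> nat \<Rightarrow> nat \<Rightarrow> nat \<Rightarrow> nat \<Rightarrow> real" where
  "Fent b k 0 p q = rent b k p q"
| "Fent b k (Suc l) p q = (\<Sum>x<mn. Qent b k p x * Fent b (Suc k) l x q)"

lemma Fmat_eq_Fent: "p < mn \<Longrightarrow> q < n \<Longrightarrow> Fmat b n s k l $$ (p,q) = Fent b k l p q"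
proof (induction l arbitrary: k p q)
  case 0
  then show ?case by (simp add: Fmat_def rmat_def rent_def)
next
  case (Suc l)
  have "Fmat b n s k (Suc l) $$ (p,q)
      = (\<Sum>x<mn. Qmat b n s k $$ (p,x) * Fmat b n s (Suc k) l $$ (x,q))"
    unfolding Fmat_Suc by (rule index_mult_mat_sum[OF Qmat_carrier Fmat_carrier Suc.prems])
  also have "\<dots> = (\<Sum>x<mn. Qent b k p x * Fent b (Suc k) l x q)"
    by (rule sum.cong) (use Suc in \<open>auto simp: Qmat_def Qent_def\<close>)
  finally show ?case by simp
qed

lemma sum_last_block:
  "(\<Sum>y<mn. if y div n = 2*s then f (y mod n) * h y else (0::real)) = (\<Sum>q<n. f q * h (2*s*n+q))"
proof -
  have "(\<Sum>y<mn. if y div n = 2*s then f (y mod n) * h y else 0)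
     = (\<Sum>t<2*s+1. \<Sum>q<n. if (t*n+q) div n = 2*s then f ((t*n+q) mod n) * h (t*n+q) else 0)"
    by (rule sum_lessThan_mult_blocks)
  also have "\<dots> = (\<Sum>t<2*s+1. if t = 2*s then (\<Sum>q<n. f q * h (t*n+q)) else 0)"
    by (rule sum.cong[OF refl]) (use n_pos in auto)
  finally show ?thesis by (simp add: sum.delta)
qed

lemma Qent_Qent_sum_comb:
  "(\<Sum>x<mn. Qent b k p x * (\<Sum>y<mn. Qent b (Suc k) x y *
      (\<Sum>t<L. \<Sum>q<n. Fent b (Suc (Suc k)) t y q * C t q)))
    = (\<Sum>t<L. \<Sum>q<n. Fent b k (Suc (Suc t)) p q * C t q)"
proof -
  have "(\<Sum>t<L. \<Sum>q<n. Fent b k (Suc (Suc t)) p q * C t q)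
     = (\<Sum>t<L. \<Sum>q<n. \<Sum>x<mn. \<Sum>y<mn.
          Qent b k p x * (Qent b (Suc k) x y * (Fent b (Suc (Suc k)) t y q * C t q)))"
    by (simp add: sum_distrib_left sum_distrib_right mult.assoc)
  also have "\<dots> = (\<Sum>x<mn. \<Sum>y<mn. \<Sum>t<L. \<Sum>q<n.
          Qent b k p x * (Qent b (Suc k) x y * (Fent b (Suc (Suc k)) t y q * C t q)))"
    by (rule sum_swap_nested[symmetric])
  finally show ?thesis by (simp add: sum_distrib_left)
qed

end

locale odd_scaling = block_indexing +
  fixes \<mu> :: real
  assumes s_pos: "1 \<le> s" and \<mu>_pos: "0 < \<mu>"
begin

definition expo :: "nat \<Rightarrow> real" where
  "expo r = (if even r then real (r div 2) / real s else -1 + real (r div 2) / real s)"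

definition fac :: "nat \<Rightarrow> real" where "fac r = \<mu> powr expo r"

definition lead :: "nat \<Rightarrow> real" where "lead r = \<mu> powr (- expo r)"

definition \<nu> :: real where "\<nu> = \<mu> powr (-1 - 1 / real s)"

definition twist :: "nat \<Rightarrow> real" where "twist x = (if even (x div n) then \<mu> else \<nu>)"

text \<open>\<open>twist\<close> is the diagonal of D and \<open>Hent\<close> gives the entries of H_l.\<close>
fun Hent :: "(nat \<Rightarrow> nat \<Rightarrow> nat \<Rightarrow> nat \<Rightarrow> real) \<Rightarrow> nat \<Rightarrow> nat \<Rightarrow> nat \<Rightarrow> nat \<Rightarrow> real" where
  "Hent b k 0 p q = rent b k p q"
| "Hent b k (Suc l) p q = (\<Sum>x<mn. Qent b k p x * (twist x * Hent b (Suc k) l x q))"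

lemma scale_eq_fac: "scale \<mu> s b = (\<lambda>k r p q. fac r * b k r p q)"
  by (simp add: fun_eq_iff scale_def fac_def expo_def)

lemma expo_Suc: "expo (Suc r) + (if even r then 1 else -1 - 1 / real s) = expo r"
  unfolding expo_def by (cases "even r") (auto elim!: evenE oddE simp: add_divide_distrib)

lemma expo_Suc_Suc: "expo (Suc (Suc r)) = expo r + 1 / real s"
  unfolding expo_def by (simp add: add_divide_distrib)

lemma fac_Suc: "fac (Suc r) * (if even r then \<mu> else \<nu>) = fac r"
proof -
  have "(if even r then \<mu> else \<nu>) = \<mu> powr (if even r then 1 else -1 - 1 / real s)"
    using \<mu>_pos by (simp add: \<nu>_def)
  then show ?thesis unfolding fac_def by (simp only: powr_add[symmetric] expo_Suc)
qed

lemma fac_last: "fac (2*s) = \<mu>"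
  unfolding fac_def expo_def using s_pos \<mu>_pos by simp

lemma fac_mult_lead: "fac r * lead r = 1"
  unfolding fac_def lead_def using \<mu>_pos by (simp add: powr_add[symmetric])

lemma lead_0: "lead 0 = 1"
  unfolding lead_def expo_def using \<mu>_pos by simp

lemma lead_1: "lead 1 = \<mu>"
  unfolding lead_def expo_def using \<mu>_pos by simp

lemma lead_last: "lead (2*s+1) = 1"
  unfolding lead_def expo_def using \<mu>_pos s_pos by simp

lemma lead_Suc_Suc: "lead (Suc (Suc l)) = \<mu> * \<nu> * lead l"
proof -
  have "\<mu> * \<nu> = \<mu> powr (1 + (-1 - 1 / real s))"
    unfolding \<nu>_def powr_add using \<mu>_pos by simp
  then show ?thesis
    unfolding lead_def expo_Suc_Suc by (simp add: powr_add[symmetric] algebra_simps)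
qed

lemma Qent_scale: "Qent (scale \<mu> s b) k p x * fac (x div n) = fac (p div n) * Qent b k p x * twist x"
  using fac_Suc[of "x div n"]
  by (auto simp: Qent_def scale_eq_fac twist_def fac_last)

lemma rent_scale: "rent (scale \<mu> s b) k p q = fac (p div n) * rent b k p q"
  unfolding rent_def scale_eq_fac by simp

lemma Fent_scale: "Fent (scale \<mu> s b) k l p q = fac (p div n) * Hent b k l p q"
proof (induction l arbitrary: k p q)
  case 0
  then show ?case by (simp add: rent_scale)
next
  case (Suc l)
  have "Fent (scale \<mu> s b) k (Suc l) p q
      = (\<Sum>x<mn. Qent (scale \<mu> s b) k p x * fac (x div n) * Hent b (Suc k) l x q)"
    by (simp add: Suc mult.assoc)
  also have "\<dots> = (\<Sum>x<mn. fac (p div n) * (Qent b k p x * (twist x * Hent b (Suc k) l x q)))"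
    by (rule sum.cong) (simp_all add: Qent_scale mult.assoc)
  finally show ?case by (simp add: sum_distrib_left)
qed

text \<open>\<open>D Q D\<close> differs from \<open>\<mu>\<nu> Q\<close> only in the last block column, where the
  difference is a multiple of r because r vanishes on odd blocks.\<close>
lemma twist_Qent_twist:
  "twist x * Qent b k x y * twist y = \<mu> * \<nu> * Qent b k x y
     + (if y div n = 2*s then \<mu> * (\<mu> - \<nu>) * rent b k x (y mod n) else 0)"
  by (auto simp: Qent_def twist_def rent_def algebra_simps)

lemma twist_rent: "twist x * rent b k x c = \<mu> * rent b k x c"
  unfolding twist_def rent_def by simp

lemma Hent_Suc_Suc:
  "Hent b k (Suc (Suc l)) p c
     = \<mu> * \<nu> * (\<Sum>x<mn. Qent b k p x * (\<Sum>y<mn. Qent b (Suc k) x y * Hent b (Suc (Suc k)) l y c))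
     + \<mu> * (\<mu> - \<nu>) * (\<Sum>q<n. Fent b k 1 p q * Hent b (Suc (Suc k)) l (2*s*n+q) c)"
proof -
  let ?H = "Hent b (Suc (Suc k)) l"
  have inner: "(\<Sum>y<mn. twist x * Qent b (Suc k) x y * twist y * ?H y c)
     = \<mu> * \<nu> * (\<Sum>y<mn. Qent b (Suc k) x y * ?H y c)
     + \<mu> * (\<mu> - \<nu>) * (\<Sum>q<n. rent b (Suc k) x q * ?H (2*s*n+q) c)" for x
  proof -
    have "(\<Sum>y<mn. twist x * Qent b (Suc k) x y * twist y * ?H y c)
       = (\<Sum>y<mn. \<mu> * \<nu> * (Qent b (Suc k) x y * ?H y c)
           + \<mu> * (\<mu> - \<nu>) * (if y div n = 2*s then rent b (Suc k) x (y mod n) * ?H y c else 0))"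
      by (intro sum.cong refl) (simp only: twist_Qent_twist, simp add: algebra_simps)
    also have "\<dots> = \<mu> * \<nu> * (\<Sum>y<mn. Qent b (Suc k) x y * ?H y c)
       + \<mu> * (\<mu> - \<nu>) * (\<Sum>y<mn. if y div n = 2*s then rent b (Suc k) x (y mod n) * ?H y c else 0)"
      by (simp only: sum.distrib sum_distrib_left)
    also have "(\<Sum>y<mn. if y div n = 2*s then rent b (Suc k) x (y mod n) * ?H y c else 0)
       = (\<Sum>q<n. rent b (Suc k) x q * ?H (2*s*n+q) c)"
      by (rule sum_last_block)
    finally show ?thesis .
  qed
  have "Hent b k (Suc (Suc l)) p c
      = (\<Sum>x<mn. Qent b k p x * (\<Sum>y<mn. twist x * Qent b (Suc k) x y * twist y * ?H y c))"
    by (simp add: sum_distrib_left mult_ac)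
  also have "\<dots> = (\<Sum>x<mn. Qent b k p x * (\<mu> * \<nu> * (\<Sum>y<mn. Qent b (Suc k) x y * ?H y c)
      + \<mu> * (\<mu> - \<nu>) * (\<Sum>q<n. rent b (Suc k) x q * ?H (2*s*n+q) c)))"
    by (simp only: inner)
  also have "\<dots> = \<mu> * \<nu> * (\<Sum>x<mn. Qent b k p x * (\<Sum>y<mn. Qent b (Suc k) x y * ?H y c))
      + \<mu> * (\<mu> - \<nu>) * (\<Sum>x<mn. Qent b k p x * (\<Sum>q<n. rent b (Suc k) x q * ?H (2*s*n+q) c))"
    by (simp add: distrib_left sum.distrib sum_distrib_left mult_ac)
  also have "(\<Sum>x<mn. Qent b k p x * (\<Sum>q<n. rent b (Suc k) x q * ?H (2*s*n+q) c))
      = (\<Sum>q<n. Fent b k 1 p q * ?H (2*s*n+q) c)"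
    by (simp add: sum_distrib_left sum_distrib_right mult_ac sum.swap[of _ "{..<n}"])
  finally show ?thesis .
qed

lemma Hent_Suc_Suc_decomposition:
  assumes C_dec: "\<And>p c. Hent b (Suc (Suc k)) l p c = lead l * Fent b (Suc (Suc k)) l p c
      + (\<Sum>t<l. \<Sum>q<n. Fent b (Suc (Suc k)) t p q * C t q c)"
  defines "C' \<equiv> \<lambda>t q c. (if t = 1 then \<mu> * (\<mu> - \<nu>) * Hent b (Suc (Suc k)) l (2*s*n+q) c else 0)
      + (if 2 \<le> t then \<mu> * \<nu> * C (t - 2) q c else 0)"
  shows "Hent b k (Suc (Suc l)) p c = lead (Suc (Suc l)) * Fent b k (Suc (Suc l)) p c
      + (\<Sum>t<Suc (Suc l). \<Sum>q<n. Fent b k t p q * C' t q c)"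
proof -
  let ?H = "Hent b (Suc (Suc k)) l"
  have "(\<Sum>x<mn. Qent b k p x * (\<Sum>y<mn. Qent b (Suc k) x y * ?H y c))
    = (\<Sum>x<mn. Qent b k p x * (\<Sum>y<mn. Qent b (Suc k) x y * (lead l * Fent b (Suc (Suc k)) l y c)))
    + (\<Sum>x<mn. Qent b k p x * (\<Sum>y<mn. Qent b (Suc k) x y *
        (\<Sum>t<l. \<Sum>q<n. Fent b (Suc (Suc k)) t y q * C t q c)))"
    by (simp add: C_dec distrib_left sum.distrib)
  then have QQH: "(\<Sum>x<mn. Qent b k p x * (\<Sum>y<mn. Qent b (Suc k) x y * ?H y c))
    = lead l * Fent b k (Suc (Suc l)) p c + (\<Sum>t<l. \<Sum>q<n. Fent b k (Suc (Suc t)) p q * C t q c)"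
    unfolding Qent_Qent_sum_comb by (simp add: sum_distrib_left mult_ac)
  have "(\<Sum>t<Suc (Suc l). \<Sum>q<n. Fent b k t p q * C' t q c)
      = (\<Sum>q<n. Fent b k 0 p q * C' 0 q c) + (\<Sum>q<n. Fent b k 1 p q * C' 1 q c)
        + (\<Sum>t<l. \<Sum>q<n. Fent b k (Suc (Suc t)) p q * C' (Suc (Suc t)) q c)"
    unfolding sum.lessThan_Suc_shift by (simp only: One_nat_def add.assoc)
  also have "\<dots> = \<mu> * (\<mu> - \<nu>) * (\<Sum>q<n. Fent b k 1 p q * ?H (2*s*n+q) c)
        + \<mu> * \<nu> * (\<Sum>t<l. \<Sum>q<n. Fent b k (Suc (Suc t)) p q * C t q c)"
    by (simp add: C'_def sum_distrib_left mult_ac)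
  finally show ?thesis
    unfolding Hent_Suc_Suc QQH lead_Suc_Suc by (simp add: algebra_simps)
qed

text \<open>Modulo columns of the odd-index F_t with t < l, the twisted product is a multiple
  of F_l: each pair of twists produces the factor \<open>\<mu>\<nu>\<close> plus a correction through r,
  which lands in the column span of F_1.\<close>
lemma Hent_decomposition:
  "\<exists>C. (\<forall>t q c. even t \<longrightarrow> C t q c = 0) \<and>
     (\<forall>p c. Hent b k l p c = lead l * Fent b k l p c + (\<Sum>t<l. \<Sum>q<n. Fent b k t p q * C t q c))"
proof (induction l arbitrary: k rule: less_induct)
  case (less l)
  consider "l = 0" | "l = 1" | l' where "l = Suc (Suc l')"
    by (metis One_nat_def not0_implies_Suc)
  then show ?case
  proof cases
    case 1
    show ?thesis by (rule exI[of _ "\<lambda>t q c. 0"]) (simp add: 1 lead_0)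
  next
    case 2
    have "Hent b k 1 p c = lead 1 * Fent b k 1 p c" for p c
      using lead_1 by (simp add: twist_rent sum_distrib_left mult_ac)
    then show ?thesis by (intro exI[of _ "\<lambda>t q c. 0"]) (simp add: 2)
  next
    case 3
    from less[of l' "Suc (Suc k)"] 3 obtain C where
      C_even: "\<forall>t q c. even t \<longrightarrow> C t q c = 0" and
      C_dec: "\<forall>p c. Hent b (Suc (Suc k)) l' p c = lead l' * Fent b (Suc (Suc k)) l' p c
          + (\<Sum>t<l'. \<Sum>q<n. Fent b (Suc (Suc k)) t p q * C t q c)" by auto
    define C' where "C' t q c = (if t = 1 then \<mu> * (\<mu> - \<nu>) * Hent b (Suc (Suc k)) l' (2*s*n+q) c else 0)
        + (if 2 \<le> t then \<mu> * \<nu> * C (t - 2) q c else 0)" for t q c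
    have "\<forall>t q c. even t \<longrightarrow> C' t q c = 0"
      unfolding C'_def using C_even by (auto simp: even_diff_nat)
    moreover have "\<forall>p c. Hent b k l p c = lead l * Fent b k l p c + (\<Sum>t<l. \<Sum>q<n. Fent b k t p q * C' t q c)"
      unfolding 3 C'_def using Hent_Suc_Suc_decomposition C_dec by blast
    ultimately show ?thesis by blast
  qed
qed

definition corr :: "(nat \<Rightarrow> nat \<Rightarrow> nat \<Rightarrow> nat \<Rightarrow> real) \<Rightarrow> nat \<Rightarrow> nat \<Rightarrow> nat \<Rightarrow> nat \<Rightarrow> nat \<Rightarrow> real" where
  "corr b k l = (SOME C. (\<forall>t q c. even t \<longrightarrow> C t q c = 0) \<and>
     (\<forall>p c. Hent b k l p c = lead l * Fent b k l p c + (\<Sum>t<l. \<Sum>q<n. Fent b k t p q * C t q c)))"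

lemma corr_even: "even t \<Longrightarrow> corr b k l t q c = 0"
  using someI_ex[OF Hent_decomposition] unfolding corr_def by blast

lemma Hent_eq_corr:
  "Hent b k l p c = lead l * Fent b k l p c + (\<Sum>t<l. \<Sum>q<n. Fent b k t p q * corr b k l t q c)"
  using someI_ex[OF Hent_decomposition] unfolding corr_def by blast

end

locale replaced_column = odd_scaling +
  fixes k i j l :: nat
  assumes i_range: "i \<in> {1..n}" and j_range: "j \<in> {1..n}" and l_less: "l < s"
begin

definition col0 :: nat where "col0 = 2*l*n + (i - 1)"

definition blk :: "nat \<Rightarrow> nat" where "blk c = (if c = col0 then 2*s+1 else c div n)"

definition idx :: "nat \<Rightarrow> nat" where "idx c = (if c = col0 then j - 1 else c mod n)"

definition Dmat :: "(nat \<Rightarrow> nat \<Rightarrow> nat \<Rightarrow> nat \<Rightarrow> real) \<Rightarrow> real mat" where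
  "Dmat b = mat mn mn (\<lambda>(p,c). Fent b k (blk c) p (idx c))"

definition Umat :: "(nat \<Rightarrow> nat \<Rightarrow> nat \<Rightarrow> nat \<Rightarrow> real) \<Rightarrow> real mat" where
  "Umat b = mat mn mn (\<lambda>(x,c). (if x = c then lead (blk c) else 0)
     + (if odd (x div n) \<and> x div n < blk c then corr b k (blk c) (x div n) (x mod n) (idx c) else 0))"

definition Lam :: "real mat" where
  "Lam = mat mn mn (\<lambda>(p,q). if p = q then fac (p div n) else 0)"

lemma Dmat_carrier: "Dmat b \<in> carrier_mat mn mn"
  by (simp add: Dmat_def)

lemma Umat_carrier: "Umat b \<in> carrier_mat mn mn"
  by (simp add: Umat_def)

lemma Lam_carrier: "Lam \<in> carrier_mat mn mn"
  by (simp add: Lam_def)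

lemma col0_div: "col0 div n = 2*l"
proof -
  have "i - 1 < n" using i_range by auto
  then show ?thesis unfolding col0_def by simp
qed

lemma col0_less: "col0 < mn"
proof -
  have "col0 < (2*l+1)*n" unfolding col0_def using i_range by auto
  also have "\<dots> \<le> mn" using l_less by (intro mult_le_mono1) simp
  finally show ?thesis .
qed

lemma blk_le: "c < mn \<Longrightarrow> blk c \<le> 2*s+1"
  unfolding blk_def by (auto simp: less_mult_imp_div_less less_imp_le)

lemma Ddet_eq_det_Dmat: "Ddet b n s k (2*l) i j = det (Dmat b)"
  unfolding Ddet_def col0_def[symmetric]
  using j_range n_pos
  by (intro arg_cong[where f = det] eq_matI)
     (auto simp: Dmat_def Nmat_def blk_def idx_def Fmat_eq_Fent less_mult_imp_div_less)

lemma Dmat_mult_Umat: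
  assumes pc: "p < mn" "c < mn"
  shows "(Dmat b * Umat b) $$ (p,c) = Hent b k (blk c) p (idx c)"
proof -
  let ?C = "corr b k (blk c)"
  have "(Dmat b * Umat b) $$ (p,c) = (\<Sum>x<mn. Dmat b $$ (p,x) * Umat b $$ (x,c))"
    by (rule index_mult_mat_sum[OF Dmat_carrier Umat_carrier pc])
  also have "\<dots> = lead (blk c) * Dmat b $$ (p,c)
      + (\<Sum>x<mn. if odd (x div n) \<and> x div n < blk c then Dmat b $$ (p,x) * ?C (x div n) (x mod n) (idx c) else 0)"
    using pc by (simp add: Umat_def algebra_simps sum.distrib if_distrib[of "\<lambda>y. _ * y"] cong: if_cong)
  also have "(\<Sum>x<mn. if odd (x div n) \<and> x div n < blk c then Dmat b $$ (p,x) * ?C (x div n) (x mod n) (idx c) else 0)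
     = (\<Sum>t<2*s+1. if odd t \<and> t < blk c then (\<Sum>q<n. Fent b k t p q * ?C t q (idx c)) else 0)"
  proof -
    have "Dmat b $$ (p, t*n+q) = Fent b k t p q" if "odd t" "t < 2*s+1" "q < n" for t q
    proof -
      have "t*n+q < (t+1)*n" using that by simp
      also have "\<dots> \<le> mn" using that by (intro mult_le_mono1) simp
      finally have lt: "t*n+q < mn" .
      have ne: "t*n+q \<noteq> col0"
      proof
        assume "t*n+q = col0"
        then have "(t*n+q) div n = 2*l" using col0_div by simp
        moreover have "(t*n+q) div n = t" using \<open>q < n\<close> by simp
        ultimately show False using \<open>odd t\<close> by simp
      qed
      show ?thesis using that lt ne pc by (simp add: Dmat_def blk_def idx_def)
    qed
    then show ?thesis using n_pos
      by (subst sum_lessThan_mult_blocks) (auto intro!: sum.cong)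
  qed
  also have "\<dots> = (\<Sum>t<blk c. \<Sum>q<n. Fent b k t p q * ?C t q (idx c))"
    by (rule sum_lessThan_odd_below) (use blk_le[OF pc(2)] corr_even in auto)
  finally show ?thesis
    using pc by (simp add: Dmat_def Hent_eq_corr)
qed

lemma Dmat_scale: "Dmat (scale \<mu> s b) = Lam * (Dmat b * Umat b)"
proof (rule eq_matI)
  fix p c assume "p < dim_row (Lam * (Dmat b * Umat b))" "c < dim_col (Lam * (Dmat b * Umat b))"
  then have pc: "p < mn" "c < mn" by (simp_all add: Lam_def Umat_def)
  have "(Lam * (Dmat b * Umat b)) $$ (p,c) = (\<Sum>y<mn. Lam $$ (p,y) * (Dmat b * Umat b) $$ (y,c))"
    by (rule index_mult_mat_sum[OF Lam_carrier mult_carrier_mat[OF Dmat_carrier Umat_carrier] pc])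
  also have "\<dots> = (\<Sum>y<mn. if y = p then fac (p div n) * Hent b k (blk c) p (idx c) else 0)"
    using pc by (intro sum.cong refl) (auto simp: Lam_def Dmat_mult_Umat)
  also have "\<dots> = fac (p div n) * Hent b k (blk c) p (idx c)"
    using pc by simp
  also have "\<dots> = Dmat (scale \<mu> s b) $$ (p,c)"
    using pc by (simp add: Dmat_def Fent_scale)
  finally show "Dmat (scale \<mu> s b) $$ (p,c) = (Lam * (Dmat b * Umat b)) $$ (p,c)" ..
qed (simp_all add: Dmat_def Lam_def Umat_def)

lemma det_Lam: "det Lam = (\<Prod>c=0..<mn. fac (c div n))"
proof -
  have "det Lam = (\<Prod>c=0..<mn. Lam $$ (c,c))"
    by (rule det_eq_prod_diag_if_weight_increasing[OF Lam_carrier, of "\<lambda>_. 0"]) (simp add: Lam_def)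
  then show ?thesis by (simp add: Lam_def)
qed

text \<open>The weight puts the odd-block columns, in their natural order, before all others;
  in that order \<open>Umat\<close> is upper triangular.\<close>
lemma det_Umat: "det (Umat b) = (\<Prod>c=0..<mn. lead (blk c))"
proof -
  have "det (Umat b) = (\<Prod>c=0..<mn. Umat b $$ (c,c))"
  proof (rule det_eq_prod_diag_if_weight_increasing[where w = "\<lambda>x. if odd (x div n) then x else mn + x"])
    fix x c assume xc: "x < mn" "c < mn" "x \<noteq> c" "Umat b $$ (x,c) \<noteq> 0"
    then have ox: "odd (x div n)" and lt: "x div n < blk c"
      unfolding Umat_def by (auto split: if_splits)
    show "(if odd (x div n) then x else mn + x) < (if odd (c div n) then c else mn + c)"
    proof (cases "c = col0")
      case True
      then show ?thesis using ox xc col0_div by auto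
    next
      case False
      then have "x div n < c div n" using lt unfolding blk_def by simp
      then have "x < c" by (meson div_le_mono not_le)
      then show ?thesis using ox by auto
    qed
  qed (simp add: Umat_def)
  also have "\<dots> = (\<Prod>c=0..<mn. lead (blk c))"
    using col0_div by (intro prod.cong refl) (auto simp: Umat_def blk_def)
  finally show ?thesis .
qed

lemma det_Lam_mult_det_Umat: "det Lam * det (Umat b) = \<mu> powr (real l / real s)"
proof -
  have "det Lam * det (Umat b) = (\<Prod>c=0..<mn. fac (c div n) * lead (blk c))"
    unfolding det_Lam det_Umat prod.distrib ..
  also have "\<dots> = fac (col0 div n) * lead (blk col0) * (\<Prod>c\<in>{0..<mn} - {col0}. fac (c div n) * lead (blk c))"
    by (rule prod.remove) (use col0_less in auto)
  also have "(\<Prod>c\<in>{0..<mn} - {col0}. fac (c div n) * lead (blk c)) = 1"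
    by (rule prod.neutral) (auto simp: blk_def fac_mult_lead)
  also have "fac (col0 div n) * lead (blk col0) = \<mu> powr (real l / real s)"
  proof -
    have blk0: "blk col0 = 2*s+1" by (simp add: blk_def)
    show ?thesis
      unfolding col0_div blk0 lead_last using \<mu>_pos by (simp add: fac_def expo_def)
  qed
  finally show ?thesis by simp
qed

theorem Ddet_scale: "Ddet (scale \<mu> s a) n s k (2*l) i j = \<mu> powr (real l / real s) * Ddet a n s k (2*l) i j"
proof -
  have "det (Dmat (scale \<mu> s a)) = det Lam * (det (Dmat a) * det (Umat a))"
    unfolding Dmat_scale
    by (simp add: det_mult[OF Lam_carrier mult_carrier_mat[OF Dmat_carrier Umat_carrier]]
        det_mult[OF Dmat_carrier Umat_carrier])
  then show ?thesis
    unfolding Ddet_eq_det_Dmat using det_Lam_mult_det_Umat by (simp add: algebra_simps)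
qed

end

theorem mainTheorem9:
  fixes n s N k :: nat and a :: "nat \<Rightarrow> nat \<Rightarrow> nat \<Rightarrow> nat \<Rightarrow> real" and \<mu> :: real
    and i j l :: nat
  assumes "n \<ge> 1" and "s \<ge> 1" and "N \<ge> 1"
    and periodic: "\<And>k' r p q. a (k' + N) r p q = a k' r p q"
    and "\<mu> > 0"
    and "i \<in> {1..n}" and "j \<in> {1..n}" and "l < s"
  shows "Ddet (scale \<mu> s a) n s k (2*l) i j = \<mu> powr (real l / real s) * Ddet a n s k (2*l) i j"
proof -
  interpret replaced_column n s \<mu> k i j l
    using assms by unfold_locales auto
  show ?thesis by (rule Ddet_scale)
qed

end
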